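(* Let $G$ be a non-amenable group and let $H$ be a subgroup of finite index in $G$. Then $$\mathcal{T}(H)-2\leq [G:H]\,(\mathcal{T}(G)-2).$$
   Context: A group $G$ admits a paradoxical decomposition if there exist positive integers $m,n$, pairwise disjoint subsets $P_1,\ldots,P_m,Q_1,\ldots,Q_n$ of $G$ and elements $g_1,\ldots,g_m,h_1,\ldots,h_n\in G$ such that $G=\bigcup_{i=1}^m P_ig_i=\bigcup_{j=1}^n Q_jh_j$. A group admits a paradoxical decomposition if and only if it is non-amenable. For a non-amenable group $G$, the Tarski number $\mathcal{T}(G)$ is the minimal possible value of $m+n$ over all paradoxical decompositions of $G$ (a finite index subgroup of a non-amenable group is non-amenable). *)

theory Defs
  imports "HOL-Algebra.Coset"
begin

definition paradoxical_decomp :: "('a, 'b) monoid_scheme \<Rightarrow> nat \<Rightarrow> nat \<Rightarrow> bool" where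
  "paradoxical_decomp G m n \<longleftrightarrow> 0 < m \<and> 0 < n \<and>
     (\<exists>P Q :: nat \<Rightarrow> 'a set. \<exists>g h :: nat \<Rightarrow> 'a.
        (\<forall>i<m. P i \<subseteq> carrier G \<and> g i \<in> carrier G) \<and>
        (\<forall>j<n. Q j \<subseteq> carrier G \<and> h j \<in> carrier G) \<and>
        (\<forall>i<m. \<forall>i'<m. i \<noteq> i' \<longrightarrow> P i \<inter> P i' = {}) \<and>
        (\<forall>j<n. \<forall>j'<n. j \<noteq> j' \<longrightarrow> Q j \<inter> Q j' = {}) \<and>
        (\<forall>i<m. \<forall>j<n. P i \<inter> Q j = {}) \<and>
        (\<Union>i<m. P i #>\<^bsub>G\<^esub> g i) = carrier G \<and>
        (\<Union>j<n. Q j #>\<^bsub>G\<^esub> h j) = carrier G)"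

definition admits_paradoxical_decomp :: "('a, 'b) monoid_scheme \<Rightarrow> bool" where
  "admits_paradoxical_decomp G \<longleftrightarrow> (\<exists>m n. paradoxical_decomp G m n)"

text \<open>Non-amenability, via the stated equivalence with admitting a paradoxical decomposition.\<close>
definition non_amenable :: "('a, 'b) monoid_scheme \<Rightarrow> bool" where
  "non_amenable G \<longleftrightarrow> admits_paradoxical_decomp G"

definition tarski_number :: "('a, 'b) monoid_scheme \<Rightarrow> nat" where
  "tarski_number G = (LEAST k. \<exists>m n. m + n = k \<and> paradoxical_decomp G m n)"

end

theory Submission
  imports Defs
begin

text \<open>A paradoxical decomposition of \<open>G\<close> with \<open>m + n\<close> pieces amounts to two injections
  \<open>\<sigma>, \<tau>\<close> of \<open>G\<close> with disjoint images such that \<open>\<sigma> x \<in> x U\<close> and \<open>\<tau> x \<in> x V\<close> for sets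
  \<open>|U| \<le> m\<close>, \<open>|V| \<le> n\<close>, both containing \<open>1\<close>.  Write \<open>G = H T\<close> with a right transversal \<open>T\<close>,
  \<open>|T| = [G:H]\<close>.  Each product \<open>t u\<close> factors as \<open>d s\<close> with \<open>d \<in> H\<close>, \<open>s \<in> T\<close>; the set \<open>D\<^sub>U\<close> of
  these \<open>d\<close> has at most \<open>1 + [G:H] (|U| - 1)\<close> elements, as \<open>u = 1\<close> gives \<open>d = 1\<close>.  Counting
  the images of \<open>X T\<close> under \<open>\<sigma>\<close> and \<open>\<tau>\<close> shows that the sets \<open>h D\<^sub>U\<close>, \<open>h D\<^sub>V\<close> (\<open>h \<in> H\<close>)
  satisfy Hall's condition, so Hall's marriage theorem for infinite families of finite sets
  gives injections of \<open>H\<close> of the same kind, with \<open>D\<^sub>U\<close> and \<open>D\<^sub>V\<close> in place of \<open>U\<close> and \<open>V\<close>.\<close>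

definition hall_condition :: "('i \<Rightarrow> 'b set) \<Rightarrow> 'i set \<Rightarrow> bool" where
  "hall_condition A I \<longleftrightarrow> (\<forall>F\<subseteq>I. finite F \<longrightarrow> card F \<le> card (\<Union>(A ` F)))"

lemma hall_conditionD:
  "hall_condition A I \<Longrightarrow> F \<subseteq> I \<Longrightarrow> finite F \<Longrightarrow> card F \<le> card (\<Union>(A ` F))"
  unfolding hall_condition_def by blast

lemma hall_condition_Union_chain:
  assumes fin: "\<forall>i\<in>I. finite (A i)" and hall: "hall_condition A I"
    and C: "C \<in> chains {S. hall_condition (\<lambda>i. A i - S `` {i}) I}"
  shows "hall_condition (\<lambda>i. A i - \<Union>C `` {i}) I"
  unfolding hall_condition_def
proof (intro allI impI)
  fix F assume F: "F \<subseteq> I" "finite F"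
  show "card F \<le> card (\<Union>((\<lambda>i. A i - \<Union>C `` {i}) ` F))"
  proof (cases "C = {}")
    case True
    then show ?thesis using hall F by (simp add: hall_condition_def)
  next
    case False
    define W where "W = \<Union>C \<inter> Sigma F A"
    have "finite W"
      unfolding W_def using F fin by (intro finite_Int disjI2 finite_SigmaI) auto
    moreover have "subset.chain {S. hall_condition (\<lambda>i. A i - S `` {i}) I} C"
      using C by (simp add: chains_alt_def)
    ultimately obtain S where S: "S \<in> C" "W \<subseteq> S"
      using finite_subset_Union_chain[of W C] False unfolding W_def by blast
    \<comment> \<open>finite character: on \<open>F\<close> the union of the chain agrees with its member \<open>S\<close>\<close>
    have "A i - \<Union>C `` {i} = A i - S `` {i}" if "i \<in> F" for i
      using that S unfolding W_def by auto
    then have "\<Union>((\<lambda>i. A i - \<Union>C `` {i}) ` F) = \<Union>((\<lambda>i. A i - S `` {i}) ` F)"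
      by auto
    moreover have "hall_condition (\<lambda>i. A i - S `` {i}) I"
      using C S(1) by (auto dest: chainsD2)
    ultimately show ?thesis using F by (simp add: hall_condition_def)
  qed
qed

lemma hall_condition_fun_upd_violated:
  assumes hall: "hall_condition A I" and upd: "\<not> hall_condition (A(i := B)) I"
  obtains F where "F \<subseteq> I - {i}" "finite F" "card (\<Union>(A ` F) \<union> B) \<le> card F"
proof -
  obtain F where F: "F \<subseteq> I" "finite F" "card (\<Union>((A(i := B)) ` F)) < card F"
    using upd unfolding hall_condition_def by (auto simp: not_le)
  have "i \<in> F"
  proof (rule ccontr)
    assume "i \<notin> F"
    then have "\<Union>((A(i := B)) ` F) = \<Union>(A ` F)" by auto
    then show False using F hall_conditionD[OF hall, of F] by simp
  qed
  then have "\<Union>((A(i := B)) ` F) = \<Union>(A ` (F - {i})) \<union> B" by auto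
  moreover have "card F = Suc (card (F - {i}))"
    using card_Suc_Diff1[OF F(2) \<open>i \<in> F\<close>] by simp
  ultimately show thesis using that[of "F - {i}"] F by auto
qed

text \<open>By submodularity of \<open>card\<close>, the union of the two index sets together with \<open>i\<close> would
  violate Hall's condition for \<open>A\<close> itself.\<close>
lemma hall_condition_violations_eq:
  assumes fin: "\<forall>j\<in>I. finite (A j)" and hall: "hall_condition A I" and i: "i \<in> I"
    and "x \<in> A i" "y \<in> A i"
    and G1: "G1 \<subseteq> I - {i}" "finite G1" "card (\<Union>(A ` G1) \<union> (A i - {x})) \<le> card G1"
    and G2: "G2 \<subseteq> I - {i}" "finite G2" "card (\<Union>(A ` G2) \<union> (A i - {y})) \<le> card G2"
  shows "x = y"
proof (rule ccontr)
  assume "x \<noteq> y"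
  define X1 where "X1 = \<Union>(A ` G1) \<union> (A i - {x})"
  define X2 where "X2 = \<Union>(A ` G2) \<union> (A i - {y})"
  have X: "finite X1" "finite X2"
    using G1 G2 fin i by (auto simp: X1_def X2_def)
  have "card (insert i (G1 \<union> G2)) \<le> card (X1 \<union> X2)"
  proof -
    have "X1 \<union> X2 = \<Union>(A ` insert i (G1 \<union> G2))"
      using \<open>x \<in> A i\<close> \<open>y \<in> A i\<close> \<open>x \<noteq> y\<close> by (auto simp: X1_def X2_def)
    moreover have "card (insert i (G1 \<union> G2)) \<le> card (\<Union>(A ` insert i (G1 \<union> G2)))"
      using G1 G2 i by (intro hall_conditionD[OF hall]) auto
    ultimately show ?thesis by simp
  qed
  moreover have "card (G1 \<inter> G2) \<le> card (X1 \<inter> X2)"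
  proof -
    have "card (G1 \<inter> G2) \<le> card (\<Union>(A ` (G1 \<inter> G2)))"
      using G1 G2 by (intro hall_conditionD[OF hall]) auto
    also have "\<dots> \<le> card (X1 \<inter> X2)"
      using X by (intro card_mono) (auto simp: X1_def X2_def)
    finally show ?thesis .
  qed
  moreover have "card (X1 \<union> X2) + card (X1 \<inter> X2) = card X1 + card X2"
    using card_Un_Int[OF X] by linarith
  moreover have "card (G1 \<union> G2) + card (G1 \<inter> G2) = card G1 + card G2"
    using card_Un_Int[OF G1(2) G2(2)] by linarith
  moreover have "card (insert i (G1 \<union> G2)) = card (G1 \<union> G2) + 1"
    using G1 G2 by (subst card_insert_disjoint) auto
  ultimately show False using G1(3) G2(3) unfolding X1_def X2_def by linarith
qed

lemma hall_condition_critical_singleton: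
  assumes fin: "\<forall>j\<in>I. finite (A j)" and hall: "hall_condition A I" and i: "i \<in> I"
    and critical: "\<forall>z\<in>A i. \<not> hall_condition (A(i := A i - {z})) I"
  shows "\<exists>x. A i = {x}"
proof -
  have "card {i} \<le> card (\<Union>(A ` {i}))"
    using hall i by (intro hall_conditionD) auto
  then obtain x where "x \<in> A i" by fastforce
  moreover have "y = x" if "y \<in> A i" for y
  proof -
    obtain G1 where "G1 \<subseteq> I - {i}" "finite G1" "card (\<Union>(A ` G1) \<union> (A i - {y})) \<le> card G1"
      using critical \<open>y \<in> A i\<close> hall hall_condition_fun_upd_violated by metis
    moreover obtain G2 where "G2 \<subseteq> I - {i}" "finite G2" "card (\<Union>(A ` G2) \<union> (A i - {x})) \<le> card G2"
      using critical \<open>x \<in> A i\<close> hall hall_condition_fun_upd_violated by metis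
    ultimately show ?thesis
      using hall_condition_violations_eq[OF fin hall i \<open>y \<in> A i\<close> \<open>x \<in> A i\<close>] by blast
  qed
  ultimately show ?thesis by blast
qed

text \<open>Zorn's lemma yields a maximal set \<open>M\<close> of pairs \<open>(i, b)\<close> whose removal from \<open>A\<close> preserves
  Hall's condition; each \<open>A i\<close> is then reduced to a singleton.\<close>
theorem hall_marriage:
  assumes fin: "\<forall>i\<in>I. finite (A i)" and hall: "hall_condition A I"
  shows "\<exists>f. inj_on f I \<and> (\<forall>i\<in>I. f i \<in> A i)"
proof -
  define good where "good = {S. hall_condition (\<lambda>i. A i - S `` {i}) I}"
  have "\<forall>C\<in>chains good. \<Union>C \<in> good"
    using hall_condition_Union_chain[OF fin hall] by (simp add: good_def)
  from Zorn_Lemma[OF this] obtain M where "M \<in> good" and M_max: "\<And>S. S \<in> good \<Longrightarrow> M \<subseteq> S \<Longrightarrow> S = M"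
    by auto
  define B where "B = (\<lambda>i. A i - M `` {i})"
  have hall_B: "hall_condition B I"
    using \<open>M \<in> good\<close> by (simp add: good_def B_def)
  have "\<exists>x. B i = {x}" if i: "i \<in> I" for i
  proof (rule hall_condition_critical_singleton[OF _ hall_B i])
    show "\<forall>j\<in>I. finite (B j)" using fin by (auto simp: B_def)
    show "\<forall>z\<in>B i. \<not> hall_condition (B(i := B i - {z})) I"
    proof (intro ballI notI)
      fix z assume z: "z \<in> B i" and "hall_condition (B(i := B i - {z})) I"
      moreover have "B(i := B i - {z}) = (\<lambda>j. A j - insert (i, z) M `` {j})"
        by (auto simp: B_def fun_eq_iff)
      ultimately have "insert (i, z) M = M"
        by (intro M_max) (auto simp: good_def)
      then show False using z by (auto simp: B_def)
    qed
  qed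
  then obtain f where f: "\<And>i. i \<in> I \<Longrightarrow> B i = {f i}" by metis
  have "inj_on f I"
  proof (rule inj_onI, rule ccontr)
    fix i j assume ij: "i \<in> I" "j \<in> I" "f i = f j" "i \<noteq> j"
    then have "card {i, j} \<le> card (\<Union>(B ` {i, j}))"
      by (intro hall_conditionD[OF hall_B]) auto
    then show False using ij f by simp
  qed
  moreover have "f i \<in> A i" if "i \<in> I" for i
    using f[OF that] by (auto simp: B_def)
  ultimately show ?thesis by blast
qed

definition translation_injection :: "('a, 'b) monoid_scheme \<Rightarrow> ('a \<Rightarrow> 'a) \<Rightarrow> 'a set \<Rightarrow> bool" where
  "translation_injection G \<sigma> U \<longleftrightarrow> inj_on \<sigma> (carrier G) \<and> U \<subseteq> carrier G \<and> finite U \<and>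
     (\<forall>x\<in>carrier G. \<sigma> x \<in> x <#\<^bsub>G\<^esub> U)"

lemma (in group) translation_injection_image_subset:
  assumes "translation_injection G \<sigma> U" "X \<subseteq> carrier G"
  shows "\<sigma> ` X \<subseteq> X <#> U"
  using assms unfolding translation_injection_def l_coset_def set_mult_def by blast

lemma (in group) translation_injection_closed:
  "translation_injection G \<sigma> U \<Longrightarrow> \<sigma> ` carrier G \<subseteq> carrier G"
  unfolding translation_injection_def using l_coset_subset_G by blast

lemma (in group) paradoxical_cover_imp_translation_injection:
  assumes m: "0 < m"
    and P_g: "\<forall>i<m. P i \<subseteq> carrier G \<and> g i \<in> carrier G"
    and disjoint: "\<forall>i<m. \<forall>i'<m. i \<noteq> i' \<longrightarrow> P i \<inter> P i' = {}"
    and cover: "(\<Union>i<m. P i #> g i) = carrier G"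
  obtains \<sigma> U where "translation_injection G \<sigma> U" "\<sigma> ` carrier G \<subseteq> (\<Union>i<m. P i)"
    "card U \<le> m" "\<one> \<in> U"
proof -
  have g0: "g 0 \<in> carrier G" using P_g m by auto
  \<comment> \<open>\<open>\<sigma> y\<close> is a \<open>p \<in> P i\<close> with \<open>y \<otimes> g 0 = p \<otimes> g i\<close>; disjointness of the pieces makes it injective\<close>
  have "\<exists>p i. i < m \<and> p \<in> P i \<and> y \<otimes> g 0 = p \<otimes> g i" if "y \<in> carrier G" for y
    using that g0 cover unfolding r_coset_def by blast
  then obtain \<sigma> \<iota> where \<sigma>:
    "\<And>y. y \<in> carrier G \<Longrightarrow> \<iota> y < m \<and> \<sigma> y \<in> P (\<iota> y) \<and> y \<otimes> g 0 = \<sigma> y \<otimes> g (\<iota> y)"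
    by metis
  define U where "U = (\<lambda>i. g 0 \<otimes> inv (g i)) ` {..<m}"
  have "inj_on \<sigma> (carrier G)"
  proof (rule inj_onI)
    fix y y' assume y: "y \<in> carrier G" "y' \<in> carrier G" "\<sigma> y = \<sigma> y'"
    then have "\<sigma> y \<in> P (\<iota> y) \<inter> P (\<iota> y')" "\<iota> y < m" "\<iota> y' < m"
      using \<sigma>[of y] \<sigma>[of y'] by auto
    then have "\<iota> y = \<iota> y'" using disjoint by blast
    then have "y \<otimes> g 0 = y' \<otimes> g 0" using \<sigma> y by metis
    then show "y = y'" using y g0 by simp
  qed
  moreover have "\<sigma> y \<in> y <# U" if y: "y \<in> carrier G" for y
  proof -
    have "\<sigma> y \<in> carrier G" "g (\<iota> y) \<in> carrier G" using \<sigma>[OF y] P_g by auto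
    then have "\<sigma> y = y \<otimes> (g 0 \<otimes> inv (g (\<iota> y)))"
      using \<sigma>[OF y] y g0 by (metis inv_solve_right m_assoc m_closed inv_closed)
    then show ?thesis using \<sigma>[OF y] unfolding U_def l_coset_def by auto
  qed
  moreover have "U \<subseteq> carrier G" using P_g g0 unfolding U_def by auto
  moreover have "card U \<le> m" unfolding U_def using card_image_le[of "{..<m}"] by auto
  moreover have "\<one> \<in> U" unfolding U_def using m g0 by (auto intro!: image_eqI[of _ _ 0])
  ultimately show thesis
    using that[of \<sigma> U] \<sigma> by (auto simp: translation_injection_def U_def)
qed

lemma paradoxical_decompE:
  assumes "paradoxical_decomp G m n"
  obtains P Q g h where "0 < m" "0 < n"
    "\<forall>i<m. P i \<subseteq> carrier G \<and> g i \<in> carrier G" "\<forall>j<n. Q j \<subseteq> carrier G \<and> h j \<in> carrier G"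
    "\<forall>i<m. \<forall>i'<m. i \<noteq> i' \<longrightarrow> P i \<inter> P i' = {}" "\<forall>j<n. \<forall>j'<n. j \<noteq> j' \<longrightarrow> Q j \<inter> Q j' = {}"
    "\<forall>i<m. \<forall>j<n. P i \<inter> Q j = {}"
    "(\<Union>i<m. P i #>\<^bsub>G\<^esub> g i) = carrier G" "(\<Union>j<n. Q j #>\<^bsub>G\<^esub> h j) = carrier G"
  using assms unfolding paradoxical_decomp_def by (elim conjE exE) (rule that)

lemma (in group) paradoxical_decomp_imp_translation_injections:
  assumes "paradoxical_decomp G m n"
  obtains \<sigma> \<tau> U V where "translation_injection G \<sigma> U" "translation_injection G \<tau> V"
    "\<sigma> ` carrier G \<inter> \<tau> ` carrier G = {}" "card U \<le> m" "card V \<le> n" "\<one> \<in> U" "\<one> \<in> V"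
proof -
  obtain P Q g h where m: "0 < m" and n: "0 < n"
    and P_g: "\<forall>i<m. P i \<subseteq> carrier G \<and> g i \<in> carrier G"
    and Q_h: "\<forall>j<n. Q j \<subseteq> carrier G \<and> h j \<in> carrier G"
    and disjoint_P: "\<forall>i<m. \<forall>i'<m. i \<noteq> i' \<longrightarrow> P i \<inter> P i' = {}"
    and disjoint_Q: "\<forall>j<n. \<forall>j'<n. j \<noteq> j' \<longrightarrow> Q j \<inter> Q j' = {}"
    and disjoint_PQ: "\<forall>i<m. \<forall>j<n. P i \<inter> Q j = {}"
    and cover_P: "(\<Union>i<m. P i #> g i) = carrier G"
    and cover_Q: "(\<Union>j<n. Q j #> h j) = carrier G"
    using assms by (rule paradoxical_decompE)
  obtain \<sigma> U where \<sigma>: "translation_injection G \<sigma> U" "\<sigma> ` carrier G \<subseteq> (\<Union>i<m. P i)"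
    "card U \<le> m" "\<one> \<in> U"
    using paradoxical_cover_imp_translation_injection[OF m P_g disjoint_P cover_P] .
  obtain \<tau> V where \<tau>: "translation_injection G \<tau> V" "\<tau> ` carrier G \<subseteq> (\<Union>j<n. Q j)"
    "card V \<le> n" "\<one> \<in> V"
    using paradoxical_cover_imp_translation_injection[OF n Q_h disjoint_Q cover_Q] .
  have "(\<Union>i<m. P i) \<inter> (\<Union>j<n. Q j) = {}" using disjoint_PQ by blast
  then have "\<sigma> ` carrier G \<inter> \<tau> ` carrier G = {}" using \<sigma>(2) \<tau>(2) by blast
  then show thesis using that \<sigma> \<tau> by blast
qed

lemma (in group) translation_injection_imp_cover:
  assumes "translation_injection G \<sigma> U"
  obtains P g where "\<forall>i<card U. P i \<subseteq> \<sigma> ` carrier G \<and> g i \<in> carrier G"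
    "\<forall>i<card U. \<forall>i'<card U. i \<noteq> i' \<longrightarrow> P i \<inter> P i' = {}"
    "(\<Union>i<card U. P i #> g i) = carrier G"
proof -
  have inj: "inj_on \<sigma> (carrier G)" and U: "U \<subseteq> carrier G" "finite U"
    and \<sigma>: "\<And>x. x \<in> carrier G \<Longrightarrow> \<sigma> x \<in> x <# U"
    using assms unfolding translation_injection_def by auto
  obtain e where e: "bij_betw e {..<card U} U"
    using ex_bij_betw_nat_finite[OF U(2)] by (auto simp: atLeast0LessThan)
  have eU: "e i \<in> carrier G" if "i < card U" for i
    using e U that by (auto simp: bij_betw_def)
  define P where "P i = {\<sigma> x |x. x \<in> carrier G \<and> \<sigma> x = x \<otimes> e i}" for i
  have "\<forall>i<card U. P i \<subseteq> \<sigma> ` carrier G \<and> inv (e i) \<in> carrier G"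
    using eU unfolding P_def by auto
  moreover have "P i \<inter> P i' = {}" if ii': "i < card U" "i' < card U" "i \<noteq> i'" for i i'
  proof (rule equals0I)
    fix z assume "z \<in> P i \<inter> P i'"
    then obtain x x' where "x \<in> carrier G" "x' \<in> carrier G" "\<sigma> x = \<sigma> x'"
      "z = x \<otimes> e i" "z = x' \<otimes> e i'" unfolding P_def by auto
    then have "e i = e i'" using inj eU ii' by (auto dest: inj_onD)
    then show False using e ii' by (auto simp: bij_betw_def inj_on_def)
  qed
  moreover have "(\<Union>i<card U. P i #> inv (e i)) = carrier G"
  proof
    show "(\<Union>i<card U. P i #> inv (e i)) \<subseteq> carrier G"
      using eU unfolding P_def r_coset_def by auto
    show "carrier G \<subseteq> (\<Union>i<card U. P i #> inv (e i))"
    proof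
      fix x assume x: "x \<in> carrier G"
      obtain u where u: "u \<in> U" "\<sigma> x = x \<otimes> u" using \<sigma>[OF x] unfolding l_coset_def by auto
      then obtain i where i: "i < card U" "e i = u"
        using e by (metis bij_betw_imp_surj_on imageE lessThan_iff)
      then have "\<sigma> x \<in> P i" unfolding P_def using x u by blast
      moreover have "x = \<sigma> x \<otimes> inv (e i)" using u i x U by (simp add: m_assoc subsetD)
      ultimately show "x \<in> (\<Union>i<card U. P i #> inv (e i))"
        using i unfolding r_coset_def by auto
    qed
  qed
  ultimately show thesis using that[of P "\<lambda>i. inv (e i)"] by blast
qed

lemma (in group) paradoxical_decomp_of_translation_injections:
  assumes \<sigma>: "translation_injection G \<sigma> U" and \<tau>: "translation_injection G \<tau> V"
    and disjoint: "\<sigma> ` carrier G \<inter> \<tau> ` carrier G = {}"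
  shows "paradoxical_decomp G (card U) (card V)"
proof -
  have "0 < card U" "0 < card V"
    using \<sigma> \<tau> by (fastforce simp: translation_injection_def l_coset_def card_gt_0_iff)+
  moreover obtain P g where P: "\<forall>i<card U. P i \<subseteq> \<sigma> ` carrier G \<and> g i \<in> carrier G"
    "\<forall>i<card U. \<forall>i'<card U. i \<noteq> i' \<longrightarrow> P i \<inter> P i' = {}" "(\<Union>i<card U. P i #> g i) = carrier G"
    using translation_injection_imp_cover[OF \<sigma>] .
  moreover obtain Q h where Q: "\<forall>j<card V. Q j \<subseteq> \<tau> ` carrier G \<and> h j \<in> carrier G"
    "\<forall>j<card V. \<forall>j'<card V. j \<noteq> j' \<longrightarrow> Q j \<inter> Q j' = {}" "(\<Union>j<card V. Q j #> h j) = carrier G"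
    using translation_injection_imp_cover[OF \<tau>] .
  moreover have "\<forall>i<card U. P i \<subseteq> carrier G \<and> g i \<in> carrier G"
    "\<forall>j<card V. Q j \<subseteq> carrier G \<and> h j \<in> carrier G"
    using P(1) Q(1) translation_injection_closed[OF \<sigma>] translation_injection_closed[OF \<tau>]
    by blast+
  moreover have "\<forall>i<card U. \<forall>j<card V. P i \<inter> Q j = {}"
    using P(1) Q(1) disjoint by blast
  ultimately show ?thesis
    unfolding paradoxical_decomp_def
    by (intro conjI exI[of _ P] exI[of _ Q] exI[of _ g] exI[of _ h]) assumption+
qed

locale right_transversal = group G + subgroup H G
  for G :: "('a, 'b) monoid_scheme" (structure) and H :: "'a set" +
  fixes T :: "'a set" and rep :: "'a \<Rightarrow> 'a"
  assumes rep_in_T: "x \<in> carrier G \<Longrightarrow> rep x \<in> T"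
    and rep_coset: "x \<in> carrier G \<Longrightarrow> x \<otimes> inv (rep x) \<in> H"
    and rep_unique: "x \<in> carrier G \<Longrightarrow> t \<in> T \<Longrightarrow> x \<otimes> inv t \<in> H \<Longrightarrow> rep x = t"
    and T_subset: "T \<subseteq> carrier G"
    and finite_T: "finite T"

lemma right_transversal_exists:
  fixes G :: "('a, 'b) monoid_scheme" (structure)
  assumes G: "group G" and H: "subgroup H G" and fin: "finite (rcosets H)"
  obtains T rep where "right_transversal G H T rep" "card T = card (rcosets H)"
proof -
  interpret group G by fact
  interpret subgroup H G by fact
  define pick where "pick C = (SOME t. t \<in> C)" for C :: "'a set"
  have pick: "pick C \<in> C" "H #> pick C = C" if C: "C \<in> rcosets H" for C
  proof -
    obtain a where a: "a \<in> carrier G" "C = H #> a" using C unfolding RCOSETS_def by blast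
    show "pick C \<in> C" unfolding pick_def using rcos_self[OF a(1) H] a(2) by (metis someI)
    then show "H #> pick C = C" using repr_independence[OF _ a(1) H] a(2) by simp
  qed
  define rep where "rep x = pick (H #> x)" for x
  define T where "T = pick ` (rcosets H)"
  have coset_rep: "H #> rep x = H #> x" if "x \<in> carrier G" for x
    unfolding rep_def using pick rcosetsI[OF subset that] by blast
  have "right_transversal G H T rep"
  proof unfold_locales
    show "rep x \<in> T" if "x \<in> carrier G" for x
      unfolding rep_def T_def using rcosetsI[OF subset that] by blast
    show T_carrier: "T \<subseteq> carrier G"
      unfolding T_def using pick rcosets_carrier[OF G] by blast
    show "finite T" unfolding T_def using fin by simp
    show "x \<otimes> inv (rep x) \<in> H" if x: "x \<in> carrier G" for x
    proof (rule rcos_module_imp[OF G])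
      show "rep x \<in> carrier G" using rcosetsI[OF subset x] pick T_carrier
        unfolding rep_def T_def by blast
      show "x \<in> H #> rep x" using coset_rep[OF x] rcos_self[OF x H] by simp
    qed
    show "rep x = t" if x: "x \<in> carrier G" and t: "t \<in> T" "x \<otimes> inv t \<in> H" for x t
    proof -
      obtain C where C: "C \<in> rcosets H" "t = pick C" using t(1) unfolding T_def by blast
      have "t \<in> carrier G" using t(1) T_carrier by blast
      then have "H #> x = H #> t"
        using rcos_module_rev[OF G _ x t(2)] repr_independence[OF _ _ H] by blast
      then show ?thesis using pick(2)[OF C(1)] C unfolding rep_def by simp
    qed
  qed
  moreover have "inj_on pick (rcosets H)"
    using pick(2) by (metis inj_onI)
  then have "card T = card (rcosets H)" unfolding T_def by (rule card_image)
  ultimately show thesis by (rule that)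
qed

context right_transversal
begin

lemma rep_mult_T:
  assumes "h \<in> H" "t \<in> T"
  shows "rep (h \<otimes> t) = t"
proof (rule rep_unique)
  have "h \<in> carrier G" "t \<in> carrier G" using assms T_subset by auto
  then show "h \<otimes> t \<in> carrier G" "h \<otimes> t \<otimes> inv t \<in> H"
    using assms by (simp_all add: m_assoc)
qed (use assms in simp)

lemma card_set_mult_T:
  assumes X: "X \<subseteq> H" "finite X"
  shows "card (X <#> T) = card X * card T"
proof -
  have "X <#> T = (\<lambda>(h, t). h \<otimes> t) ` (X \<times> T)"
    unfolding set_mult_def by auto
  moreover have "inj_on (\<lambda>(h, t). h \<otimes> t) (X \<times> T)"
  proof (rule inj_onI, clarify)
    fix h t h' t' assume ht: "h \<in> X" "t \<in> T" "h' \<in> X" "t' \<in> T" "h \<otimes> t = h' \<otimes> t'"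
    then have "t = t'" using rep_mult_T X by (metis subsetD)
    moreover have "h \<in> carrier G" "h' \<in> carrier G" "t \<in> carrier G"
      using ht X T_subset by auto
    ultimately show "h = h' \<and> t = t'" using ht(5) by simp
  qed
  ultimately show ?thesis by (simp add: card_image card_cartesian_product)
qed

text \<open>\<open>shifts U\<close> collects the \<open>H\<close>-components of the products \<open>t \<otimes> u\<close> in the factorization
  \<open>G = H T\<close>; it turns right translation by \<open>U\<close> into left translation within \<open>H\<close>.\<close>
definition shifts :: "'a set \<Rightarrow> 'a set" where
  "shifts U = (\<lambda>(t, u). t \<otimes> u \<otimes> inv (rep (t \<otimes> u))) ` (T \<times> U)"

lemma shifts_subset: "U \<subseteq> carrier G \<Longrightarrow> shifts U \<subseteq> H"
  unfolding shifts_def using T_subset by (auto intro!: rep_coset)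

lemma finite_shifts: "finite U \<Longrightarrow> finite (shifts U)"
  unfolding shifts_def using finite_T by simp

lemma card_shifts_le:
  assumes U: "finite U" "\<one> \<in> U"
  shows "card (shifts U) \<le> 1 + card T * (card U - 1)"
proof -
  have "t \<otimes> \<one> \<otimes> inv (rep (t \<otimes> \<one>)) = \<one>" if "t \<in> T" for t
    using that T_subset rep_mult_T[of \<one> t] by auto
  then have "shifts U \<subseteq> insert \<one> (shifts (U - {\<one>}))"
    unfolding shifts_def by auto
  then have "card (shifts U) \<le> card (insert \<one> (shifts (U - {\<one>})))"
    using U by (intro card_mono) (auto intro: finite_shifts)
  also have "\<dots> \<le> Suc (card (shifts (U - {\<one>})))"
    by (rule card_insert_le_m1) auto
  also have "\<dots> \<le> Suc (card (T \<times> (U - {\<one>})))"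
    unfolding shifts_def using U finite_T by (intro Suc_le_mono[THEN iffD2] card_image_le) auto
  finally show ?thesis
    using U by (simp add: card_cartesian_product)
qed

lemma set_mult_T_subset_shifts:
  assumes "X \<subseteq> H" "U \<subseteq> carrier G"
  shows "X <#> T <#> U \<subseteq> X <#> shifts U <#> T"
proof
  fix x assume "x \<in> X <#> T <#> U"
  then obtain h t u where htu: "h \<in> X" "t \<in> T" "u \<in> U" "x = h \<otimes> t \<otimes> u"
    unfolding set_mult_def by auto
  have carrier: "h \<in> carrier G" "t \<in> carrier G" "u \<in> carrier G"
    using htu assms T_subset by auto
  then have "rep (t \<otimes> u) \<in> T" by (simp add: rep_in_T)
  then have "rep (t \<otimes> u) \<in> carrier G" using T_subset by blast
  have "x = h \<otimes> (t \<otimes> u \<otimes> inv (rep (t \<otimes> u))) \<otimes> rep (t \<otimes> u)"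
    using carrier \<open>rep (t \<otimes> u) \<in> carrier G\<close> htu(4) by (simp add: m_assoc)
  moreover have "t \<otimes> u \<otimes> inv (rep (t \<otimes> u)) \<in> shifts U"
    using htu unfolding shifts_def by auto
  ultimately show "x \<in> X <#> shifts U <#> T"
    using htu(1) \<open>rep (t \<otimes> u) \<in> T\<close> unfolding set_mult_def by blast
qed

text \<open>The counting behind Hall's condition: \<open>\<sigma>\<close> and \<open>\<tau>\<close> inject \<open>X T\<close> and \<open>Y T\<close> disjointly
  into \<open>S T\<close>, and multiplication by \<open>T\<close> multiplies cardinalities of subsets of \<open>H\<close> by \<open>|T|\<close>.\<close>
lemma card_le_card_set_mult_shifts:
  assumes \<sigma>: "translation_injection G \<sigma> U" and \<tau>: "translation_injection G \<tau> V"
    and disjoint: "\<sigma> ` carrier G \<inter> \<tau> ` carrier G = {}"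
    and XY: "X \<subseteq> H" "Y \<subseteq> H" "finite X" "finite Y"
  shows "card X + card Y \<le> card ((X <#> shifts U) \<union> (Y <#> shifts V))"
proof -
  define S where "S = (X <#> shifts U) \<union> (Y <#> shifts V)"
  have UV: "U \<subseteq> carrier G" "V \<subseteq> carrier G" "finite U" "finite V"
    using \<sigma> \<tau> by (auto simp: translation_injection_def)
  have "S \<subseteq> H" "finite S"
    unfolding S_def using XY UV shifts_subset[OF UV(1)] shifts_subset[OF UV(2)] finite_shifts
    by (auto simp: set_mult_def intro!: subgroup.m_closed[OF subgroup_axioms])
  have carrier: "X <#> T \<subseteq> carrier G" "Y <#> T \<subseteq> carrier G"
    using XY T_subset by (intro set_mult_closed; auto)+
  have "\<sigma> ` (X <#> T) \<subseteq> X <#> T <#> U"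
    using carrier(1) by (rule translation_injection_image_subset[OF \<sigma>])
  also have "\<dots> \<subseteq> X <#> shifts U <#> T" using XY UV by (intro set_mult_T_subset_shifts)
  also have "\<dots> \<subseteq> S <#> T" unfolding S_def by (intro mono_set_mult) auto
  finally have \<sigma>_image: "\<sigma> ` (X <#> T) \<subseteq> S <#> T" .
  have "\<tau> ` (Y <#> T) \<subseteq> Y <#> T <#> V"
    using carrier(2) by (rule translation_injection_image_subset[OF \<tau>])
  also have "\<dots> \<subseteq> Y <#> shifts V <#> T" using XY UV by (intro set_mult_T_subset_shifts)
  also have "\<dots> \<subseteq> S <#> T" unfolding S_def by (intro mono_set_mult) auto
  finally have \<tau>_image: "\<tau> ` (Y <#> T) \<subseteq> S <#> T" .
  have "inj_on \<sigma> (X <#> T)" "inj_on \<tau> (Y <#> T)"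
    using \<sigma> \<tau> carrier by (auto simp: translation_injection_def intro: inj_on_subset)
  then have "(card X + card Y) * card T = card (\<sigma> ` (X <#> T)) + card (\<tau> ` (Y <#> T))"
    using XY by (simp add: card_set_mult_T card_image add_mult_distrib)
  also have "\<dots> = card (\<sigma> ` (X <#> T) \<union> \<tau> ` (Y <#> T))"
  proof (intro card_Un_disjoint[symmetric])
    show "finite (\<sigma> ` (X <#> T))" "finite (\<tau> ` (Y <#> T))"
      using XY finite_T by (auto simp: set_mult_def)
    show "\<sigma> ` (X <#> T) \<inter> \<tau> ` (Y <#> T) = {}"
      using disjoint carrier by blast
  qed
  also have "\<dots> \<le> card (S <#> T)"
    using \<sigma>_image \<tau>_image \<open>finite S\<close> finite_T by (intro card_mono) (auto simp: set_mult_def)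
  also have "\<dots> = card S * card T"
    using \<open>S \<subseteq> H\<close> \<open>finite S\<close> by (rule card_set_mult_T)
  finally show ?thesis
    using rep_in_T[of \<one>] finite_T by (auto simp: card_gt_0_iff S_def)
qed

lemma hall_condition_shifts:
  assumes \<sigma>: "translation_injection G \<sigma> U" and \<tau>: "translation_injection G \<tau> V"
    and disjoint: "\<sigma> ` carrier G \<inter> \<tau> ` carrier G = {}"
  shows "hall_condition (\<lambda>(h, b). h <# shifts (if b then V else U)) (H \<times> UNIV)"
  unfolding hall_condition_def
proof (intro allI impI)
  fix F :: "('a \<times> bool) set" assume F: "F \<subseteq> H \<times> UNIV" "finite F"
  define X where "X = {h. (h, False) \<in> F}"
  define Y where "Y = {h. (h, True) \<in> F}"
  have XY: "X \<subseteq> H" "Y \<subseteq> H" "finite X" "finite Y"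
    using F by (auto simp: X_def Y_def dest: finite_imageI[of _ fst] intro: finite_subset)
  have F_split: "F = X \<times> {False} \<union> Y \<times> {True}"
  proof (rule Set.set_eqI)
    show "p \<in> F \<longleftrightarrow> p \<in> X \<times> {False} \<union> Y \<times> {True}" for p
      by (cases p, cases "snd p") (auto simp: X_def Y_def)
  qed
  have "card F = card X + card Y"
    unfolding F_split using XY by (subst card_Un_disjoint) (auto simp: card_cartesian_product)
  also have "\<dots> \<le> card ((X <#> shifts U) \<union> (Y <#> shifts V))"
    using card_le_card_set_mult_shifts[OF \<sigma> \<tau> disjoint XY] .
  also have "(X <#> shifts U) \<union> (Y <#> shifts V) = \<Union>((\<lambda>(h, b). h <# shifts (if b then V else U)) ` F)"
  proof -
    define D where "D b = shifts (if b then V else U)" for b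
    have "\<Union>((\<lambda>(h, b). h <# D b) ` (Z \<times> {b})) = Z <#> D b" for Z b
      unfolding set_mult_def l_coset_def by auto
    then show ?thesis
      unfolding F_split image_Un Union_Un_distrib by (simp add: D_def)
  qed
  finally show "card F \<le> card (\<Union>((\<lambda>(h, b). h <# shifts (if b then V else U)) ` F))" .
qed

lemma paradoxical_decomp_subgroup:
  assumes \<sigma>: "translation_injection G \<sigma> U" and \<tau>: "translation_injection G \<tau> V"
    and disjoint: "\<sigma> ` carrier G \<inter> \<tau> ` carrier G = {}" and "\<one> \<in> U" "\<one> \<in> V"
  obtains m n where "paradoxical_decomp (G\<lparr>carrier := H\<rparr>) m n"
    "m \<le> 1 + card T * (card U - 1)" "n \<le> 1 + card T * (card V - 1)"
proof -
  have UV: "U \<subseteq> carrier G" "V \<subseteq> carrier G" "finite U" "finite V"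
    using \<sigma> \<tau> by (auto simp: translation_injection_def)
  obtain f where f: "inj_on f (H \<times> UNIV)"
    "\<And>h b. h \<in> H \<Longrightarrow> f (h, b) \<in> h <# shifts (if b then V else U)"
    using hall_marriage[OF _ hall_condition_shifts[OF \<sigma> \<tau> disjoint]] UV finite_shifts
    by (force simp: l_coset_def)
  let ?H = "G\<lparr>carrier := H\<rparr>"
  have "paradoxical_decomp ?H (card (shifts U)) (card (shifts V))"
  proof (rule group.paradoxical_decomp_of_translation_injections[OF subgroup_is_group[OF is_group]])
    have "translation_injection ?H (\<lambda>h. f (h, b)) (shifts (if b then V else U))" for b
      using f UV shifts_subset finite_shifts
      by (auto simp: translation_injection_def inj_on_def)
    from this[of False] this[of True]
    show "translation_injection ?H (\<lambda>h. f (h, False)) (shifts U)"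
      "translation_injection ?H (\<lambda>h. f (h, True)) (shifts V)" by simp_all
    show "(\<lambda>h. f (h, False)) ` carrier ?H \<inter> (\<lambda>h. f (h, True)) ` carrier ?H = {}"
      using f(1) by (auto dest: inj_onD)
  qed
  then show thesis
    using that card_shifts_le UV assms(4,5) by blast
qed

end

lemma paradoxical_decomp_finite_index_subgroup:
  fixes G :: "('a, 'b) monoid_scheme" (structure)
  assumes "group G" "subgroup H G" "finite (rcosets H)" "paradoxical_decomp G m n"
  obtains m' n' where "paradoxical_decomp (G\<lparr>carrier := H\<rparr>) m' n'"
    "m' \<le> 1 + card (rcosets H) * (m - 1)" "n' \<le> 1 + card (rcosets H) * (n - 1)"
proof -
  interpret group G by fact
  obtain \<sigma> \<tau> U V where \<sigma>: "translation_injection G \<sigma> U" and \<tau>: "translation_injection G \<tau> V"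
    and disjoint: "\<sigma> ` carrier G \<inter> \<tau> ` carrier G = {}"
    and UV: "card U \<le> m" "card V \<le> n" "\<one> \<in> U" "\<one> \<in> V"
    using paradoxical_decomp_imp_translation_injections[OF assms(4)] .
  obtain T rep where "right_transversal G H T rep" and card_T: "card T = card (rcosets H)"
    using right_transversal_exists[OF assms(1-3)] .
  then obtain m' n' where "paradoxical_decomp (G\<lparr>carrier := H\<rparr>) m' n'"
    "m' \<le> 1 + card T * (card U - 1)" "n' \<le> 1 + card T * (card V - 1)"
    using right_transversal.paradoxical_decomp_subgroup[OF _ \<sigma> \<tau> disjoint UV(3,4)] by blast
  moreover have "card T * (card U - 1) \<le> card (rcosets H) * (m - 1)"
    "card T * (card V - 1) \<le> card (rcosets H) * (n - 1)"
    using UV card_T by (simp_all add: diff_le_mono)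
  ultimately show thesis by (intro that[of m' n']) linarith+
qed

lemma tarski_number_attained:
  assumes "non_amenable G"
  obtains m n where "paradoxical_decomp G m n" "tarski_number G = m + n"
proof -
  have "\<exists>k m n. m + n = k \<and> paradoxical_decomp G m n"
    using assms unfolding non_amenable_def admits_paradoxical_decomp_def by blast
  then have "\<exists>m n. m + n = tarski_number G \<and> paradoxical_decomp G m n"
    unfolding tarski_number_def by (rule LeastI_ex)
  then show thesis using that by auto
qed

lemma tarski_number_le: "paradoxical_decomp G m n \<Longrightarrow> tarski_number G \<le> m + n"
  unfolding tarski_number_def by (rule Least_le) blast

theorem theorem1:
  fixes G :: "('a, 'b) monoid_scheme" and H :: "'a set"
  assumes "group G"
    and "non_amenable G"
    and "subgroup H G"
    and "finite (rcosets\<^bsub>G\<^esub> H)"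
  shows "int (tarski_number (G\<lparr>carrier := H\<rparr>)) - 2
           \<le> int (card (rcosets\<^bsub>G\<^esub> H)) * (int (tarski_number G) - 2)"
proof -
  obtain m n where decomp_G: "paradoxical_decomp G m n" and tarski_G: "tarski_number G = m + n"
    using tarski_number_attained[OF assms(2)] .
  then have "1 \<le> m" "1 \<le> n" by (auto simp: paradoxical_decomp_def)
  obtain m' n' where decomp_H: "paradoxical_decomp (G\<lparr>carrier := H\<rparr>) m' n'"
    and "m' \<le> 1 + card (rcosets\<^bsub>G\<^esub> H) * (m - 1)" "n' \<le> 1 + card (rcosets\<^bsub>G\<^esub> H) * (n - 1)"
    using paradoxical_decomp_finite_index_subgroup[OF assms(1,3,4) decomp_G] .
  with tarski_number_le[OF decomp_H]
  have "int (tarski_number (G\<lparr>carrier := H\<rparr>)) - 2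
      \<le> int (card (rcosets\<^bsub>G\<^esub> H) * (m - 1) + card (rcosets\<^bsub>G\<^esub> H) * (n - 1))"
    by linarith
  also have "\<dots> = int (card (rcosets\<^bsub>G\<^esub> H)) * (int (tarski_number G) - 2)"
    using \<open>1 \<le> m\<close> \<open>1 \<le> n\<close> tarski_G by (simp add: of_nat_diff) (simp add: algebra_simps)
  finally show ?thesis .
qed

end
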